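(* Let $T_n \doteq (n+1)^{-3/4}$, $A_n \doteq (n+1)^{1/4}$ and $p_n \doteq T_n/A_n = \frac{1}{n+1}$ for $n\ge 0$. Let $\{X_{n+1}\}_{n\ge0}$ be independent random variables with $X_{n+1}=A_n$ with probability $p_n$ and $X_{n+1}=0$ with probability $1-p_n$. Let $\mathcal{F}_n=\sigma(X_1,\dots,X_n)$, $z_0=0$ and $z_{n+1}=(1-T_n)z_n+X_{n+1}$ for $n\ge0$. Then $\{T_n\}$ satisfies $\sum_n T_n=\infty$, $\sum_n T_n^2<\infty$, and: (1) $\mathbb{E}[z_{n+1}\mid\mathcal{F}_n]=(1-T_n)z_n+T_n$ for all $n\ge 0$, i.e. $\{z_n\}$ satisfies $\mathbb{E}[z_{n+1}\mid \mathcal F_n]\le(1-\alpha T_n)z_n+\xi T_n$ with $\alpha=\xi=1$; (2) $\limsup_{n\to\infty} z_n=\infty$ almost surely. *)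

theory Defs
  imports "HOL-Probability.Probability"
begin

definition stepT :: "nat \<Rightarrow> real" where
  "stepT n = (real n + 1) powr (-3/4)"

definition ampA :: "nat \<Rightarrow> real" where
  "ampA n = (real n + 1) powr (1/4)"

definition probp :: "nat \<Rightarrow> real" where
  "probp n = stepT n / ampA n"

definition nat_filtration :: "'a measure \<Rightarrow> (nat \<Rightarrow> 'a \<Rightarrow> real) \<Rightarrow> nat \<Rightarrow> 'a measure" where
  "nat_filtration M X n =
     sigma (space M) {X i -` B \<inter> space M | i B. i \<in> {1..n} \<and> B \<in> sets borel}"

end

theory Submission
  imports Defs "HOL-Real_Asymp.Real_Asymp"
begin

(* The increment X_{n+1} is A_n times the indicator of a jump event of probability
   p_n = 1/(n+1) that is independent of F_n, so its conditional mean is A_n p_n = T_n;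
   as z_n is F_n-measurable, linearity of conditional expectation gives (1).
   The jump events are independent and sum p_n diverges, so by the second Borel-Cantelli
   lemma infinitely many jumps occur almost surely; since z_{n+1} >= X_{n+1} >= 0 and
   A_n -> infinity, this forces limsup z_n = infinity. *)

lemma stepT_le_1: "stepT n \<le> 1"
  using ge_one_powr_ge_zero[of "real n + 1" "3/4"]
  unfolding stepT_def by (simp add: powr_minus field_simps)

lemma ampA_pos: "0 < ampA n"
  by (simp add: ampA_def)

lemma probp_eq: "probp n = 1 / (real n + 1)"
proof -
  have "probp n = (real n + 1) powr (-3/4 - 1/4)"
    unfolding probp_def stepT_def ampA_def by (rule powr_diff[symmetric])
  also have "\<dots> = 1 / (real n + 1)"
    by (simp add: powr_minus_divide)
  finally show ?thesis .
qed

lemma stepT_eq_probp_mult_ampA: "stepT n = probp n * ampA n"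
  using ampA_pos[of n] by (simp add: probp_def)

lemma filterlim_ampA_at_top: "filterlim ampA at_top sequentially"
  unfolding ampA_def by real_asymp

lemma not_summable_probp: "\<not> summable probp"
proof
  assume "summable probp"
  moreover have "probp = (\<lambda>n. inverse (real (Suc n)))"
    by (simp add: fun_eq_iff probp_eq divide_inverse add.commute)
  ultimately have "summable (\<lambda>n. inverse (real (Suc n)))"
    by simp
  then have "summable (\<lambda>n. inverse (real n))"
    by (subst (asm) summable_Suc_iff)
  then show False
    using not_summable_harmonic by blast
qed

lemma not_summable_stepT: "\<not> summable stepT"
proof
  assume "summable stepT"
  moreover have "stepT = (\<lambda>n. real (Suc n) powr (-3/4))"
    by (simp add: fun_eq_iff stepT_def add.commute)
  ultimately have "summable (\<lambda>n. real (Suc n) powr (-3/4))"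
    by simp
  then show False
    by (subst (asm) summable_Suc_iff) (simp add: summable_real_powr_iff)
qed

lemma summable_stepT_squared: "summable (\<lambda>n. (stepT n)\<^sup>2)"
proof -
  have "(stepT n)\<^sup>2 = real (Suc n) powr (-3/2)" for n
    unfolding stepT_def by (simp add: powr_powr[symmetric] add.commute powr_power)
  moreover have "summable (\<lambda>n. real (Suc n) powr (-3/2))"
    by (subst summable_Suc_iff) (simp add: summable_real_powr_iff)
  ultimately show ?thesis
    by simp
qed

lemma limsup_eq_infinity_if_frequently_ge:
  fixes a u :: "nat \<Rightarrow> real"
  assumes "filterlim a at_top sequentially" and "\<exists>\<^sub>F n in sequentially. a n \<le> u n"
  shows "limsup (\<lambda>n. ereal (u n)) = \<infinity>"
proof (rule ccontr)
  assume "limsup (\<lambda>n. ereal (u n)) \<noteq> \<infinity>"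
  then obtain c where "limsup (\<lambda>n. ereal (u n)) < ereal c"
    using less_PInf_Ex_of_nat by (auto simp: less_top[symmetric] top_ereal_def)
  then have "\<forall>\<^sub>F n in sequentially. u n < c"
    by (auto dest: Limsup_lessD)
  moreover have "\<forall>\<^sub>F n in sequentially. c < a n"
    using assms(1) by (simp add: filterlim_at_top_dense)
  ultimately have "\<forall>\<^sub>F n in sequentially. \<not> a n \<le> u n"
    by eventually_elim auto
  with assms(2) show False
    by (simp add: not_frequently[symmetric])
qed

lemma (in prob_space) AE_in_Un_if_disjoint_prob_add_eq_1:
  assumes "A \<in> events" "B \<in> events" "A \<inter> B = {}" "prob A + prob B = 1"
  shows "AE x in M. x \<in> A \<union> B"
proof (rule AE_prob_1)
  show "prob (A \<union> B) = 1"
    using assms finite_measure_Union[of A B] by simp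
qed

lemma (in prob_space) indep_events_reindex:
  assumes "indep_events A I" "inj_on f J" "f ` J \<subseteq> I"
  shows "indep_events (\<lambda>j. A (f j)) J"
proof (rule indep_eventsI)
  show "A (f j) \<in> events" if "j \<in> J" for j
    using assms that by (auto simp: indep_events_def)
next
  fix K assume K: "K \<subseteq> J" "finite K" "K \<noteq> {}"
  have inj: "inj_on f K"
    using assms(2) K(1) by (rule inj_on_subset)
  have "f ` K \<subseteq> I" "finite (f ` K)" "f ` K \<noteq> {}"
    using assms(3) K by auto
  then have "prob (\<Inter>k\<in>f ` K. A k) = (\<Prod>k\<in>f ` K. prob (A k))"
    using assms(1) unfolding indep_events_def by blast
  then show "prob (\<Inter>k\<in>K. A (f k)) = (\<Prod>k\<in>K. prob (A (f k)))"
    by (simp add: prod.reindex[OF inj])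
qed

lemma (in prob_space) prob_INT_compl_le_exp:
  assumes indep: "indep_events E I" and J: "J \<subseteq> I" "finite J" "J \<noteq> {}"
  shows "prob (\<Inter>j\<in>J. space M - E j) \<le> exp (- (\<Sum>j\<in>J. prob (E j)))"
proof -
  have E: "E j \<in> events" if "j \<in> I" for j
    using indep that by (auto simp: indep_events_def)
  have "indep_sets (\<lambda>i. sigma_sets (space M) {E i}) I"
    using indep unfolding indep_events_def_alt
    by (rule indep_sets_sigma) (simp add: Int_stable_def)
  moreover have "space M - E j \<in> sigma_sets (space M) {E j}" for j
    by (blast intro: sigma_sets.Compl sigma_sets.Basic)
  ultimately have "prob (\<Inter>j\<in>J. space M - E j) = (\<Prod>j\<in>J. prob (space M - E j))"
    using J by (intro indep_setsD) auto
  also have "\<dots> = (\<Prod>j\<in>J. 1 - prob (E j))"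
    using E J by (intro prod.cong) (auto simp: prob_compl)
  also have "\<dots> \<le> (\<Prod>j\<in>J. exp (- prob (E j)))"
    by (intro prod_mono) (use exp_ge_add_one_self[of "- prob _"] in auto)
  also have "\<dots> = exp (- (\<Sum>j\<in>J. prob (E j)))"
    using exp_sum[OF J(2), of "\<lambda>j. - prob (E j)"] by (simp add: sum_negf)
  finally show ?thesis .
qed

theorem (in prob_space) second_borel_cantelli:
  assumes indep: "indep_events E UNIV" and diverges: "\<not> summable (\<lambda>n. prob (E n))"
  shows "AE x in M. \<exists>\<^sub>F n in sequentially. x \<in> E n"
proof -
  have E[measurable]: "E n \<in> events" for n
    using indep by (auto simp: indep_events_def)
  define B where "B n = (\<Inter>k\<in>{n..}. space M - E k)" for n
  have B_events: "B n \<in> events" for n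
    unfolding B_def by (intro sets.countable_INT') auto
  have "prob (B n) = 0" for n
  proof (rule ccontr)
    assume "prob (B n) \<noteq> 0"
    then have pos: "0 < prob (B n)"
      using measure_nonneg[of M "B n"] by linarith
    have "\<not> summable (\<lambda>k. prob (E (k + n)))"
      using diverges summable_iff_shift[of "\<lambda>k. prob (E k)" n] by simp
    then obtain m where m: "- ln (prob (B n)) < (\<Sum>k<m. prob (E (k + n)))"
      using summableI_nonneg_bounded[of "\<lambda>k. prob (E (k + n))"] by (meson not_le measure_nonneg)
    moreover have "ln (prob (B n)) \<le> 0"
      using pos by simp
    ultimately have "m \<noteq> 0"
      by (cases m) auto
    have "B n \<subseteq> (\<Inter>j\<in>(\<lambda>k. k + n) ` {..<m}. space M - E j)"
      unfolding B_def by auto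
    then have "prob (B n) \<le> prob (\<Inter>j\<in>(\<lambda>k. k + n) ` {..<m}. space M - E j)"
      using \<open>m \<noteq> 0\<close> by (intro finite_measure_mono) auto
    also have "\<dots> \<le> exp (- (\<Sum>j\<in>(\<lambda>k. k + n) ` {..<m}. prob (E j)))"
      using \<open>m \<noteq> 0\<close> by (intro prob_INT_compl_le_exp[OF indep]) auto
    also have "\<dots> = exp (- (\<Sum>k<m. prob (E (k + n))))"
      by (simp add: sum.reindex)
    also have "\<dots> < exp (ln (prob (B n)))"
      using m by simp
    finally show False
      using pos by simp
  qed
  then have "AE x in M. \<forall>n. x \<notin> B n"
    using B_events by (simp add: AE_all_countable prob_eq_0)
  then show ?thesis
    using AE_space by eventually_elim (auto simp: B_def frequently_sequentially)
qed

lemma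
  shows space_nat_filtration: "space (nat_filtration M X n) = space M"
    and sets_nat_filtration: "sets (nat_filtration M X n) =
      sigma_sets (space M) {X i -` B \<inter> space M | i B. i \<in> {1..n} \<and> B \<in> sets borel}"
  unfolding nat_filtration_def by (auto intro!: space_measure_of sets_measure_of)

lemma measurable_nat_filtration:
  assumes "i \<in> {1..n}"
  shows "X i \<in> borel_measurable (nat_filtration M X n)"
proof (rule measurableI)
  fix B :: "real set" assume "B \<in> sets borel"
  then show "X i -` B \<inter> space (nat_filtration M X n) \<in> sets (nat_filtration M X n)"
    using assms by (auto simp: space_nat_filtration sets_nat_filtration intro!: sigma_sets.Basic)
qed simp

lemma subalgebra_nat_filtration:
  assumes "\<And>i. i \<in> {1..n} \<Longrightarrow> X i \<in> borel_measurable M"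
  shows "subalgebra M (nat_filtration M X n)"
  unfolding subalgebra_def space_nat_filtration sets_nat_filtration
  using assms by (auto intro!: sets.sigma_sets_subset measurable_sets)

lemma sets_nat_filtration_subset:
  "sets (nat_filtration M X n) \<subseteq> sigma_sets (space M)
     (\<Union>i\<in>{1..n}. sigma_sets (space M) {X i -` B \<inter> space M | B. B \<in> sets borel})"
  unfolding sets_nat_filtration
proof (intro sigma_sets_subseteq subsetI)
  fix S assume "S \<in> {X i -` B \<inter> space M | i B. i \<in> {1..n} \<and> B \<in> sets borel}"
  then obtain i B where S: "S = X i -` B \<inter> space M" and "i \<in> {1..n}" "B \<in> sets borel"
    by blast
  then have "S \<in> sigma_sets (space M) {X i -` B \<inter> space M | B. B \<in> sets borel}"
    by (blast intro: sigma_sets.Basic)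
  with \<open>i \<in> {1..n}\<close> show "S \<in> (\<Union>i\<in>{1..n}. sigma_sets (space M) {X i -` B \<inter> space M | B. B \<in> sets borel})"
    by blast
qed

lemma (in prob_space) indep_nat_filtration:
  assumes indep: "indep_vars (\<lambda>_. borel) X I" and "{1..n} \<subseteq> I" "m \<in> I" "n < m"
    and A: "A \<in> sets (nat_filtration M X n)" and B: "B \<in> sets borel"
  shows "prob (A \<inter> (X m -` B \<inter> space M)) = prob A * prob (X m -` B \<inter> space M)"
proof -
  define \<sigma> where "\<sigma> i = sigma_sets (space M) {X i -` B \<inter> space M | B. B \<in> sets borel}" for i
  define K where "K b = (if b then {1..n} else {m})" for b
  have "indep_sets \<sigma> I"
    using indep unfolding indep_vars_def \<sigma>_def by auto
  then have "indep_sets \<sigma> (\<Union>b. K b)"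
    by (rule indep_sets_mono_index[rotated]) (use assms(2,3) in \<open>auto simp: K_def\<close>)
  then have indep_K: "indep_sets (\<lambda>b. sigma_sets (space M) (\<Union>i\<in>K b. \<sigma> i)) UNIV"
  proof (rule indep_sets_collect_sigma[where J = UNIV, simplified])
    show "Int_stable (\<sigma> i)" for i
      using sigma_algebra_sigma_sets[of "{X i -` B \<inter> space M | B. B \<in> sets borel}" "space M"]
      unfolding \<sigma>_def sigma_algebra_def by (auto intro: algebra.Int_stable)
    show "disjoint_family K"
      using assms(4) by (auto simp: disjoint_family_on_def K_def)
  qed
  define A' where "A' b = (if b then A else X m -` B \<inter> space M)" for b
  have "A \<in> sigma_sets (space M) (\<Union>i\<in>K True. \<sigma> i)"
    unfolding K_def \<sigma>_def if_True by (rule subsetD[OF sets_nat_filtration_subset A])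
  moreover have "X m -` B \<inter> space M \<in> sigma_sets (space M) (\<Union>i\<in>K False. \<sigma> i)"
  proof -
    have "X m -` B \<inter> space M \<in> \<sigma> m"
      using B unfolding \<sigma>_def by (blast intro: sigma_sets.Basic)
    then show ?thesis
      unfolding K_def by (auto intro: sigma_sets.Basic)
  qed
  ultimately have "prob (\<Inter>b. A' b) = (\<Prod>b\<in>UNIV. prob (A' b))"
    by (intro indep_setsD[OF indep_K]) (auto simp: A'_def)
  then show ?thesis
    by (simp add: A'_def UNIV_bool Int_commute)
qed

lemma (in prob_space) real_cond_exp_indicator_indep:
  assumes subalg: "subalgebra M F" and E: "E \<in> events"
    and indep: "\<And>A. A \<in> sets F \<Longrightarrow> prob (A \<inter> E) = prob A * prob E"
  shows "AE x in M. real_cond_exp M F (indicator E) x = prob E"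
proof -
  interpret finite_measure_subalgebra M F
    using subalg by unfold_locales
  show ?thesis
  proof (rule real_cond_exp_charact)
    fix A assume A: "A \<in> sets F"
    then have "A \<in> events"
      using subalg by (auto simp: subalgebra_def)
    then show "(\<integral>x\<in>A. indicator E x \<partial>M) = (\<integral>x\<in>A. prob E \<partial>M)"
      using E indep[OF A]
      by (simp add: set_lebesgue_integral_def indicator_inter_arith[symmetric] Int_commute)
  qed (use E in \<open>auto simp: emeasure_eq_measure\<close>)
qed

locale sparse_jump_recursion = prob_space M
  for M :: "'a measure" and X z :: "nat \<Rightarrow> 'a \<Rightarrow> real" +
  assumes indep_X: "indep_vars (\<lambda>_. borel) X {1..}"
    and prob_jump: "prob {\<omega> \<in> space M. X (Suc n) \<omega> = ampA n} = probp n"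
    and prob_no_jump: "prob {\<omega> \<in> space M. X (Suc n) \<omega> = 0} = 1 - probp n"
    and z_0: "z 0 \<omega> = 0"
    and z_Suc: "z (Suc n) \<omega> = (1 - stepT n) * z n \<omega> + X (Suc n) \<omega>"
begin

definition jump :: "nat \<Rightarrow> 'a set" where
  "jump n = {\<omega> \<in> space M. X (Suc n) \<omega> = ampA n}"

lemma measurable_X [measurable]: "X (Suc n) \<in> borel_measurable M"
  using indep_X by (auto simp: indep_vars_def)

lemma jump_in_events [measurable]: "jump n \<in> events"
  unfolding jump_def by measurable

lemma AE_X_eq_indicator_jump: "AE \<omega> in M. X (Suc n) \<omega> = ampA n * indicator (jump n) \<omega>"
proof -
  have "AE \<omega> in M. \<omega> \<in> jump n \<union> {\<omega> \<in> space M. X (Suc n) \<omega> = 0}"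
    using ampA_pos[of n] prob_jump[of n] prob_no_jump[of n]
    by (intro AE_in_Un_if_disjoint_prob_add_eq_1) (auto simp: jump_def)
  then show ?thesis
    by eventually_elim (use ampA_pos[of n] in \<open>auto simp: jump_def\<close>)
qed

lemma indep_jump: "indep_events jump UNIV"
proof -
  have "indep_events (\<lambda>i. {\<omega> \<in> space M. X i \<omega> = ampA (i - 1)}) {1..}"
    using indep_X by (rule indep_eventsI_indep_vars) simp
  then have "indep_events (\<lambda>j. {\<omega> \<in> space M. X (Suc j) \<omega> = ampA (Suc j - 1)}) UNIV"
    by (rule indep_events_reindex) auto
  then show ?thesis
    unfolding jump_def[abs_def] by simp
qed

lemma AE_frequently_jump: "AE \<omega> in M. \<exists>\<^sub>F n in sequentially. \<omega> \<in> jump n"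
proof (rule second_borel_cantelli[OF indep_jump])
  show "\<not> summable (\<lambda>n. prob (jump n))"
    using not_summable_probp by (simp add: jump_def prob_jump)
qed

lemma z_0_fun: "z 0 = (\<lambda>_. 0)"
  by (simp add: fun_eq_iff z_0)

lemma z_Suc_fun: "z (Suc n) = (\<lambda>\<omega>. (1 - stepT n) * z n \<omega> + X (Suc n) \<omega>)"
  by (simp add: fun_eq_iff z_Suc)

lemma X_le_z_Suc:
  assumes X_nonneg: "\<And>k. 0 \<le> X (Suc k) \<omega>"
  shows "X (Suc n) \<omega> \<le> z (Suc n) \<omega>"
proof -
  have z_nonneg: "0 \<le> z k \<omega>" for k
  proof (induction k)
    case (Suc k)
    then show ?case
      using X_nonneg[of k] stepT_le_1[of k] by (simp add: z_Suc)
  qed (simp add: z_0)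
  then show ?thesis
    using stepT_le_1[of n] by (simp add: z_Suc)
qed

lemma AE_limsup_z: "AE \<omega> in M. limsup (\<lambda>n. ereal (z n \<omega>)) = \<infinity>"
proof -
  have "AE \<omega> in M. \<forall>k. 0 \<le> X (Suc k) \<omega>"
    unfolding AE_all_countable
  proof
    show "AE \<omega> in M. 0 \<le> X (Suc k) \<omega>" for k
      using AE_X_eq_indicator_jump[of k] by eventually_elim (simp add: less_imp_le[OF ampA_pos])
  qed
  with AE_frequently_jump show ?thesis
  proof eventually_elim
    case (elim \<omega>)
    have "ampA k \<le> z (Suc k) \<omega>" if "\<omega> \<in> jump k" for k
      using that X_le_z_Suc[of \<omega> k] elim(2) by (simp add: jump_def)
    then have "\<exists>\<^sub>F k in sequentially. ampA k \<le> z (Suc k) \<omega>"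
      by (rule frequently_elim1[OF elim(1)])
    then have "limsup (\<lambda>k. ereal (z (Suc k) \<omega>)) = \<infinity>"
      by (intro limsup_eq_infinity_if_frequently_ge[OF filterlim_ampA_at_top]) simp
    then show ?case
      using limsup_shift[of "\<lambda>n. ereal (z n \<omega>)"] by simp
  qed
qed

lemma integrable_X: "integrable M (X (Suc n))"
proof (rule integrable_cong_AE_imp)
  show "integrable M (\<lambda>\<omega>. ampA n * indicator (jump n) \<omega>)"
    by (simp add: emeasure_eq_measure)
qed (use AE_X_eq_indicator_jump in \<open>auto simp: eq_commute\<close>)

lemma integrable_z: "integrable M (z n)"
  by (induction n) (simp_all add: z_0_fun z_Suc_fun integrable_X)

lemma measurable_z_nat_filtration:
  "k \<le> n \<Longrightarrow> z k \<in> borel_measurable (nat_filtration M X n)"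
proof (induction k)
  case (Suc k)
  then have "z k \<in> borel_measurable (nat_filtration M X n)"
    and "X (Suc k) \<in> borel_measurable (nat_filtration M X n)"
    by (auto intro: measurable_nat_filtration)
  then show ?case
    by (simp add: z_Suc_fun)
qed (simp add: z_0_fun)

lemma subalgebra_nat_filtration_X: "subalgebra M (nat_filtration M X n)"
  using indep_X by (intro subalgebra_nat_filtration) (auto simp: indep_vars_def)

lemma real_cond_exp_X:
  "AE \<omega> in M. real_cond_exp M (nat_filtration M X n) (X (Suc n)) \<omega> = stepT n"
proof -
  let ?F = "nat_filtration M X n"
  interpret finite_measure_subalgebra M ?F
    using subalgebra_nat_filtration_X by unfold_locales
  have jump_eq: "jump n = X (Suc n) -` {ampA n} \<inter> space M"
    by (auto simp: jump_def)
  have "AE \<omega> in M. real_cond_exp M ?F (indicator (jump n)) \<omega> = prob (jump n)"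
  proof (rule real_cond_exp_indicator_indep[OF subalgebra_nat_filtration_X jump_in_events])
    show "prob (A \<inter> jump n) = prob A * prob (jump n)" if "A \<in> sets ?F" for A
      unfolding jump_eq using that by (intro indep_nat_filtration[OF indep_X]) auto
  qed
  moreover have "AE \<omega> in M. real_cond_exp M ?F (X (Suc n)) \<omega>
      = real_cond_exp M ?F (\<lambda>\<omega>. ampA n * indicator (jump n) \<omega>) \<omega>"
    by (intro real_cond_exp_cong AE_X_eq_indicator_jump) auto
  moreover have "AE \<omega> in M. real_cond_exp M ?F (\<lambda>\<omega>. ampA n * indicator (jump n) \<omega>) \<omega>
      = ampA n * real_cond_exp M ?F (indicator (jump n)) \<omega>"
    by (intro real_cond_exp_cmult) (simp add: emeasure_eq_measure)
  ultimately show ?thesis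
    by eventually_elim (simp add: jump_def prob_jump stepT_eq_probp_mult_ampA)
qed

lemma real_cond_exp_z_Suc:
  "AE \<omega> in M. real_cond_exp M (nat_filtration M X n) (z (Suc n)) \<omega> = (1 - stepT n) * z n \<omega> + stepT n"
proof -
  let ?F = "nat_filtration M X n"
  interpret finite_measure_subalgebra M ?F
    using subalgebra_nat_filtration_X by unfold_locales
  have "AE \<omega> in M. real_cond_exp M ?F (z (Suc n)) \<omega>
      = real_cond_exp M ?F (\<lambda>\<omega>. (1 - stepT n) * z n \<omega>) \<omega> + real_cond_exp M ?F (X (Suc n)) \<omega>"
    unfolding z_Suc_fun by (intro real_cond_exp_add) (simp_all add: integrable_z integrable_X)
  moreover have "AE \<omega> in M. real_cond_exp M ?F (\<lambda>\<omega>. (1 - stepT n) * z n \<omega>) \<omega>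
      = (1 - stepT n) * real_cond_exp M ?F (z n) \<omega>"
    by (intro real_cond_exp_cmult integrable_z)
  moreover have "AE \<omega> in M. real_cond_exp M ?F (z n) \<omega> = z n \<omega>"
    by (intro real_cond_exp_F_meas integrable_z measurable_z_nat_filtration) simp
  ultimately show ?thesis
    using real_cond_exp_X[of n] by eventually_elim simp
qed

end

theorem mainTheorem1:
  fixes M :: "'a measure" and X z :: "nat \<Rightarrow> 'a \<Rightarrow> real"
  assumes "prob_space M"
    and "prob_space.indep_vars M (\<lambda>_. borel) X {1..}"
    and "\<And>n. prob_space.prob M {\<omega> \<in> space M. X (Suc n) \<omega> = ampA n} = probp n"
    and "\<And>n. prob_space.prob M {\<omega> \<in> space M. X (Suc n) \<omega> = 0} = 1 - probp n"
    and "\<And>\<omega>. z 0 \<omega> = 0"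
    and "\<And>n \<omega>. z (Suc n) \<omega> = (1 - stepT n) * z n \<omega> + X (Suc n) \<omega>"
  shows "\<not> summable stepT
    \<and> summable (\<lambda>n. (stepT n)\<^sup>2)
    \<and> (\<forall>n. AE \<omega> in M. real_cond_exp M (nat_filtration M X n) (z (Suc n)) \<omega>
                          = (1 - stepT n) * z n \<omega> + stepT n)
    \<and> (AE \<omega> in M. limsup (\<lambda>n. ereal (z n \<omega>)) = \<infinity>)"
proof -
  interpret sparse_jump_recursion M X z
    using assms by (simp add: sparse_jump_recursion_def sparse_jump_recursion_axioms_def)
  show ?thesis
    using not_summable_stepT summable_stepT_squared real_cond_exp_z_Suc AE_limsup_z by blast
qed

end
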